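(* Let $d\ge1$ and $q\ge2$ even. There is no function $G:[0,\infty)\to\mathbb{R}$ satisfying $B_{d,0}(G)=b_d^{-1}$, $B_{d,i}(G)=0$ for $i\in\{2,4,\ldots,q-2\}$, $B_{d,q}(G)\neq0$, that minimizes $B_{d,q}(G)^{2(d+2)}\cdot V_{d,1}(G)^{2q}$ among all functions satisfying these moment conditions; i.e., this minimization problem has no solution.
   Context: For $G:[0,\infty)\to\mathbb{R}$: $B_{d,i}(G)=\int_0^\infty x^{d-1+i}G(x)\,dx$, $V_{d,1}(G)=\int_0^\infty x^{d-1}\{G^{(1)}(x)\}^2dx$, and $b_d=2\pi^{d/2}/\Gamma(d/2)$. *)

theory Defs
  imports "HOL-Analysis.Analysis"
begin

definition Bmom :: "nat \<Rightarrow> nat \<Rightarrow> (real \<Rightarrow> real) \<Rightarrow> real" where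
  "Bmom d i G = (LINT x:{0..}|lborel. x ^ (d - 1 + i) * G x)"

definition Vfun :: "nat \<Rightarrow> (real \<Rightarrow> real) \<Rightarrow> real" where
  "Vfun d G = (LINT x:{0..}|lborel. x ^ (d - 1) * (deriv G x)\<^sup>2)"

text \<open>b_d = 2 pi^(d/2) / Gamma(d/2), the surface area of the unit sphere in R^d.\<close>
definition bconst :: "nat \<Rightarrow> real" where
  "bconst d = 2 * pi powr (real d / 2) / Gamma (real d / 2)"

definition admissible :: "nat \<Rightarrow> nat \<Rightarrow> (real \<Rightarrow> real) \<Rightarrow> bool" where
  "admissible d q G \<longleftrightarrow>
     (\<forall>x>0. G differentiable (at x)) \<and>
     set_integrable lborel {0..} (\<lambda>x. x ^ (d - 1) * (deriv G x)\<^sup>2) \<and>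
     (\<forall>i\<le>q. even i \<longrightarrow> set_integrable lborel {0..} (\<lambda>x. x ^ (d - 1 + i) * G x)) \<and>
     Bmom d 0 G = 1 / bconst d \<and>
     (\<forall>i. even i \<and> 2 \<le> i \<and> i \<le> q - 2 \<longrightarrow> Bmom d i G = 0) \<and>
     Bmom d q G \<noteq> 0"

definition objective :: "nat \<Rightarrow> nat \<Rightarrow> (real \<Rightarrow> real) \<Rightarrow> real" where
  "objective d q G = Bmom d q G ^ (2 * (d + 2)) * Vfun d G ^ (2 * q)"

end

theory Submission
  imports Defs
begin

text \<open>The moment conditions are linear, and the dilation \<open>G \<mapsto> c^d G(c x)\<close> preserves
  \<open>B_{d,0}\<close>, divides \<open>B_{d,i}\<close> by \<open>c^i\<close> and multiplies \<open>V_{d,1}\<close> by \<open>c^(d+2)\<close>. Hence mixing an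
  admissible \<open>G\<close> with its dilation by 2, \<open>H = a G + (1 - a) 2^d G(2 x)\<close>, gives an admissible \<open>H\<close>
  with \<open>B_{d,q}(H) = (a + (1 - a) / 2^q) B_{d,q}(G)\<close> and \<open>V_{d,1}(H) \<le> M(a) V_{d,1}(G)\<close>, where \<open>M\<close>
  is continuous. For \<open>a\<close> close to the root of \<open>a + (1 - a) / 2^q\<close> the objective of \<open>H\<close> is
  therefore smaller than that of \<open>G\<close>, which is positive: if \<open>V_{d,1}(G) = 0\<close>, then \<open>G\<close> is
  constant on \<open>(0, \<infinity>)\<close>, and the moments of such a function vanish since dilation multiplies
  it by \<open>c^d\<close>.\<close>

lemma set_integral_Ici_cong_pos:
  fixes f g :: "real \<Rightarrow> real"
  assumes "\<And>x. x > 0 \<Longrightarrow> f x = g x"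
  shows "set_integrable lborel {0..} f \<longleftrightarrow> set_integrable lborel {0..} g"
    and "(LINT x:{0..}|lborel. f x) = (LINT x:{0..}|lborel. g x)"
proof -
  have eq: "indicator {0..} x *\<^sub>R f x = indicator {0..} x *\<^sub>R g x" if "x \<noteq> 0" for x :: real
    using assms[of x] that by (cases "x > 0") (auto simp: indicator_def)
  show "set_integrable lborel {0..} f \<longleftrightarrow> set_integrable lborel {0..} g"
    unfolding set_integrable_def by (rule integrable_discrete_difference[where X="{0}"]) (use eq in auto)
  show "(LINT x:{0..}|lborel. f x) = (LINT x:{0..}|lborel. g x)"
    unfolding set_lebesgue_integral_def by (rule integral_discrete_difference[where X="{0}"]) (use eq in auto)
qed

lemma set_integral_Ici_dilate:
  fixes f :: "real \<Rightarrow> real" and c :: real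
  assumes "c > 0"
  shows "set_integrable lborel {0..} (\<lambda>x. f (c * x)) \<longleftrightarrow> set_integrable lborel {0..} f"
    and "(LINT x:{0..}|lborel. f (c * x)) = (LINT x:{0..}|lborel. f x) / c"
proof -
  define g where "g = (\<lambda>x::real. indicator {0..} x *\<^sub>R f x)"
  have g_dilate: "g (0 + c * x) = indicator {0..} x *\<^sub>R f (c * x)" for x
    using assms by (simp add: g_def indicator_def zero_le_mult_iff)
  show "set_integrable lborel {0..} (\<lambda>x. f (c * x)) \<longleftrightarrow> set_integrable lborel {0..} f"
    using lborel_integrable_real_affine_iff[of c g 0] assms
    unfolding set_integrable_def g_dilate by (simp add: g_def)
  have "integral\<^sup>L lborel g = c * (LINT x:{0..}|lborel. f (c * x))"
    using lborel_integral_real_affine[of c g 0] assms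
    unfolding set_lebesgue_integral_def g_dilate by simp
  then show "(LINT x:{0..}|lborel. f (c * x)) = (LINT x:{0..}|lborel. f x) / c"
    using assms unfolding set_lebesgue_integral_def g_def by (simp add: field_simps)
qed

definition dilate :: "nat \<Rightarrow> real \<Rightarrow> (real \<Rightarrow> real) \<Rightarrow> real \<Rightarrow> real" where
  "dilate d c G x = c ^ d * G (c * x)"

lemma Bmom_dilate:
  assumes "d \<ge> 1" and "c > 0"
  shows "set_integrable lborel {0..} (\<lambda>x. x ^ (d - 1 + i) * dilate d c G x)
           \<longleftrightarrow> set_integrable lborel {0..} (\<lambda>x. x ^ (d - 1 + i) * G x)"
    and "Bmom d i (dilate d c G) = Bmom d i G / c ^ i"
proof -
  define k where "k = d - 1 + i"
  define f where "f = (\<lambda>x::real. x ^ k * G x)"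
  have eq: "x ^ k * dilate d c G x = (c ^ d / c ^ k) * f (c * x)" for x
    using assms by (simp add: f_def dilate_def power_mult_distrib)
  show "set_integrable lborel {0..} (\<lambda>x. x ^ (d - 1 + i) * dilate d c G x)
          \<longleftrightarrow> set_integrable lborel {0..} (\<lambda>x. x ^ (d - 1 + i) * G x)"
    using set_integral_Ici_dilate(1)[OF assms(2), of f] assms
    unfolding k_def[symmetric] eq by (simp add: f_def)
  have "Bmom d i (dilate d c G) = (c ^ d / c ^ k) * ((LINT x:{0..}|lborel. f x) / c)"
    unfolding Bmom_def k_def[symmetric] eq set_integral_mult_right set_integral_Ici_dilate(2)[OF assms(2)] ..
  also have "\<dots> = Bmom d i G / c ^ i"
  proof -
    have "k + 1 = d + i"
      using assms(1) unfolding k_def by simp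
    then have "c ^ k * c = c ^ d * c ^ i"
      by (metis power_Suc2 power_add Suc_eq_plus1)
    then show ?thesis
      using assms(2) unfolding Bmom_def f_def k_def[symmetric] by (simp add: field_simps)
  qed
  finally show "Bmom d i (dilate d c G) = Bmom d i G / c ^ i" .
qed

lemma borel_measurable_deriv_Ioi:
  fixes G :: "real \<Rightarrow> real"
  assumes "\<forall>x>0. G differentiable (at x)"
  shows "(\<lambda>x. indicator {0<..} x * deriv G x) \<in> borel_measurable borel"
proof (rule borel_measurable_LIMSEQ_real)
  define u where "u n x = indicator {0<..} x * ((G (x + 1 / Suc n) - G x) / (1 / Suc n))"
    for n :: nat and x :: real
  have cont: "continuous_on {0<..} G"
    using assms by (meson continuous_at_imp_continuous_on differentiable_imp_continuous_within greaterThan_iff)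
  show "u n \<in> borel_measurable borel" for n
    unfolding u_def
  proof (rule borel_measurable_continuous_on_indicator[where 'b=real, simplified])
    have "continuous_on {0<..} (\<lambda>x. G (x + 1 / Suc n))"
      by (rule continuous_on_compose2[OF cont]) (auto intro!: continuous_intros add_pos_pos)
    with cont show "continuous_on {0<..} (\<lambda>x. (G (x + 1 / Suc n) - G x) / (1 / Suc n))"
      by (intro continuous_intros) auto
  qed simp
  show "(\<lambda>n. u n x) \<longlonglongrightarrow> indicator {0<..} x * deriv G x" for x
  proof (cases "x > 0")
    case True
    then have "((\<lambda>h. (G (x + h) - G x) / h) \<longlongrightarrow> deriv G x) (at 0)"
      using assms DERIV_deriv_iff_real_differentiable DERIV_def by blast
    moreover have "filterlim (\<lambda>n. 1 / real (Suc n)) (at 0) sequentially"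
      unfolding filterlim_at by (auto intro: LIMSEQ_Suc[OF lim_inverse_n'] simp del: of_nat_Suc)
    ultimately have "(\<lambda>n. (G (x + 1 / Suc n) - G x) / (1 / Suc n)) \<longlonglongrightarrow> deriv G x"
      by (rule filterlim_compose)
    with True show ?thesis
      by (simp add: u_def)
  qed (simp add: u_def)
qed

lemma has_real_derivative_dilate:
  assumes "(G has_real_derivative D) (at (c * x))"
  shows "(dilate d c G has_real_derivative c ^ (d + 1) * D) (at x)"
proof -
  have "((\<lambda>x. c ^ d * G (c * x)) has_real_derivative c ^ d * (D * c)) (at x)"
    by (intro DERIV_cmult DERIV_chain2[OF assms DERIV_cmult_Id])
  moreover have "c ^ d * (D * c) = c ^ (d + 1) * D"
    by simp
  ultimately show ?thesis
    unfolding dilate_def[abs_def] by simp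
qed

lemma Vfun_dilate:
  assumes "d \<ge> 1" and "c > 0" and "\<forall>x>0. G differentiable (at x)"
  shows "set_integrable lborel {0..} (\<lambda>x. x ^ (d - 1) * (deriv (dilate d c G) x)\<^sup>2)
           \<longleftrightarrow> set_integrable lborel {0..} (\<lambda>x. x ^ (d - 1) * (deriv G x)\<^sup>2)"
    and "Vfun d (dilate d c G) = c ^ (d + 2) * Vfun d G"
proof -
  define f where "f = (\<lambda>x::real. x ^ (d - 1) * (deriv G x)\<^sup>2)"
  define C where "C = (c ^ (d + 1))\<^sup>2 / c ^ (d - 1)"
  have eq: "x ^ (d - 1) * (deriv (dilate d c G) x)\<^sup>2 = C * f (c * x)" if "x > 0" for x
  proof -
    have "(G has_real_derivative deriv G (c * x)) (at (c * x))"
      using assms(2,3) that DERIV_deriv_iff_real_differentiable by simp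
    then have "deriv (dilate d c G) x = c ^ (d + 1) * deriv G (c * x)"
      by (rule DERIV_imp_deriv[OF has_real_derivative_dilate])
    then show ?thesis
      using assms(2) by (simp add: f_def C_def power_mult_distrib)
  qed
  have integrable_iff: "set_integrable lborel {0..} (\<lambda>x. x ^ (d - 1) * (deriv (dilate d c G) x)\<^sup>2)
      \<longleftrightarrow> set_integrable lborel {0..} (\<lambda>x. C * f (c * x))"
    using eq by (rule set_integral_Ici_cong_pos(1))
  have integral_eq: "Vfun d (dilate d c G) = (LINT x:{0..}|lborel. C * f (c * x))"
    unfolding Vfun_def using eq by (rule set_integral_Ici_cong_pos(2))
  show "set_integrable lborel {0..} (\<lambda>x. x ^ (d - 1) * (deriv (dilate d c G) x)\<^sup>2)
          \<longleftrightarrow> set_integrable lborel {0..} (\<lambda>x. x ^ (d - 1) * (deriv G x)\<^sup>2)"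
  proof -
    have "C \<noteq> 0"
      using assms(2) unfolding C_def by simp
    then have "set_integrable lborel {0..} (\<lambda>x. C * f (c * x)) \<longleftrightarrow> set_integrable lborel {0..} f"
      using set_integral_Ici_dilate(1)[OF assms(2), of f] by simp
    then show ?thesis
      unfolding integrable_iff f_def .
  qed
  have "Vfun d (dilate d c G) = C * ((LINT x:{0..}|lborel. f x) / c)"
    unfolding integral_eq set_integral_mult_right set_integral_Ici_dilate(2)[OF assms(2)] ..
  also have "\<dots> = c ^ (d + 2) * Vfun d G"
  proof -
    have "(d + 1) * 2 = (d - 1) + 1 + (d + 2)"
      using assms(1) by simp
    then have "(c ^ (d + 1))\<^sup>2 = c ^ (d - 1) * c * c ^ (d + 2)"
      by (metis power_mult power_add power_one_right)
    then have "C / c = c ^ (d + 2)"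
      using assms(2) unfolding C_def by simp
    moreover have "C * (L / c) = C / c * L" for L
      by simp
    ultimately show ?thesis
      unfolding Vfun_def f_def by (simp only:)
  qed
  finally show "Vfun d (dilate d c G) = c ^ (d + 2) * Vfun d G" .
qed

lemma Vfun_nonneg: "Vfun d G \<ge> 0"
  unfolding Vfun_def set_lebesgue_integral_def
  by (rule Bochner_Integration.integral_nonneg) (simp add: indicator_def)

lemma Vfun_lincomb_le:
  fixes F G :: "real \<Rightarrow> real" and a b :: real
  assumes F: "\<forall>x>0. F differentiable (at x)" "set_integrable lborel {0..} (\<lambda>x. x ^ (d - 1) * (deriv F x)\<^sup>2)"
    and G: "\<forall>x>0. G differentiable (at x)" "set_integrable lborel {0..} (\<lambda>x. x ^ (d - 1) * (deriv G x)\<^sup>2)"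
  defines "H \<equiv> \<lambda>x. a * F x + b * G x"
  shows "set_integrable lborel {0..} (\<lambda>x. x ^ (d - 1) * (deriv H x)\<^sup>2)"
    and "Vfun d H \<le> 2 * a\<^sup>2 * Vfun d F + 2 * b\<^sup>2 * Vfun d G"
proof -
  \<comment> \<open>\<open>deriv K\<close> is only known to be measurable on \<open>(0, \<infinity>)\<close>, so it is cut off there.\<close>
  define D where "D K x = indicator {0<..} x * deriv K x" for K :: "real \<Rightarrow> real" and x :: real
  have [measurable]: "D F \<in> borel_measurable borel" "D G \<in> borel_measurable borel"
    unfolding D_def[abs_def] using F(1) G(1) by (simp_all add: borel_measurable_deriv_Ioi)
  have V_D: "set_integrable lborel {0..} (\<lambda>x. x ^ (d - 1) * (D K x)\<^sup>2)"
    "(LINT x:{0..}|lborel. x ^ (d - 1) * (D K x)\<^sup>2) = Vfun d K"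
    if "set_integrable lborel {0..} (\<lambda>x. x ^ (d - 1) * (deriv K x)\<^sup>2)" for K
  proof -
    have "x ^ (d - 1) * (D K x)\<^sup>2 = x ^ (d - 1) * (deriv K x)\<^sup>2" if "x > 0" for x
      using that by (simp add: D_def)
    then show "set_integrable lborel {0..} (\<lambda>x. x ^ (d - 1) * (D K x)\<^sup>2)"
      "(LINT x:{0..}|lborel. x ^ (d - 1) * (D K x)\<^sup>2) = Vfun d K"
      using that unfolding Vfun_def by (simp_all cong: set_integral_Ici_cong_pos)
  qed
  define \<Phi> where "\<Phi> x = x ^ (d - 1) * (a * D F x + b * D G x)\<^sup>2" for x :: real
  define \<Psi> where "\<Psi> x = 2 * a\<^sup>2 * (x ^ (d - 1) * (D F x)\<^sup>2) + 2 * b\<^sup>2 * (x ^ (d - 1) * (D G x)\<^sup>2)"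
    for x :: real
  have deriv_H: "x ^ (d - 1) * (deriv H x)\<^sup>2 = \<Phi> x" if "x > 0" for x
  proof -
    have "(F has_real_derivative deriv F x) (at x)" "(G has_real_derivative deriv G x) (at x)"
      using F(1) G(1) that DERIV_deriv_iff_real_differentiable by blast+
    then have "deriv H x = a * deriv F x + b * deriv G x"
      unfolding H_def by (intro DERIV_imp_deriv DERIV_add DERIV_cmult)
    then show ?thesis
      using that by (simp add: \<Phi>_def D_def)
  qed
  have \<Psi>_integrable: "set_integrable lborel {0..} \<Psi>"
    unfolding \<Psi>_def using V_D(1)[OF F(2)] V_D(1)[OF G(2)]
    by (intro set_integral_add set_integrable_mult_right)
  have \<Phi>_le_\<Psi>: "\<Phi> x \<le> \<Psi> x" if "x \<ge> 0" for x
  proof -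
    have "(a * D F x + b * D G x)\<^sup>2 \<le> 2 * (a * D F x)\<^sup>2 + 2 * (b * D G x)\<^sup>2"
      using sum_squares_bound[of "a * D F x" "b * D G x"] power2_sum[of "a * D F x" "b * D G x"]
      by linarith
    then have "x ^ (d - 1) * (a * D F x + b * D G x)\<^sup>2
        \<le> x ^ (d - 1) * (2 * (a * D F x)\<^sup>2 + 2 * (b * D G x)\<^sup>2)"
      using that by (intro mult_left_mono) auto
    then show ?thesis
      unfolding \<Phi>_def \<Psi>_def by (simp add: algebra_simps power_mult_distrib)
  qed
  have \<Phi>_integrable: "set_integrable lborel {0..} \<Phi>"
  proof (rule set_integrable_bound[OF \<Psi>_integrable])
    show "set_borel_measurable lborel {0..} \<Phi>"
      unfolding set_borel_measurable_def \<Phi>_def by measurable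
    show "AE x in lborel. x \<in> {0..} \<longrightarrow> norm (\<Phi> x) \<le> norm (\<Psi> x)"
    proof (intro AE_I2 impI)
      fix x :: real
      assume "x \<in> {0..}"
      then have "0 \<le> \<Phi> x" "\<Phi> x \<le> \<Psi> x"
        using \<Phi>_le_\<Psi> by (auto simp: \<Phi>_def)
      then show "norm (\<Phi> x) \<le> norm (\<Psi> x)"
        by simp
    qed
  qed
  show "set_integrable lborel {0..} (\<lambda>x. x ^ (d - 1) * (deriv H x)\<^sup>2)"
    using deriv_H \<Phi>_integrable by (simp cong: set_integral_Ici_cong_pos)
  have "Vfun d H = (LINT x:{0..}|lborel. \<Phi> x)"
    unfolding Vfun_def using deriv_H by (rule set_integral_Ici_cong_pos(2))
  also have "\<dots> \<le> (LINT x:{0..}|lborel. \<Psi> x)"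
    using \<Phi>_integrable \<Psi>_integrable \<Phi>_le_\<Psi> by (rule set_integral_mono) simp
  also have "\<dots> = 2 * a\<^sup>2 * Vfun d F + 2 * b\<^sup>2 * Vfun d G"
    unfolding \<Psi>_def using V_D[OF F(2)] V_D[OF G(2)] by (simp add: set_integral_add)
  finally show "Vfun d H \<le> 2 * a\<^sup>2 * Vfun d F + 2 * b\<^sup>2 * Vfun d G" .
qed

lemma Bmom_mix:
  fixes a c :: real
  assumes "d \<ge> 1" and "c > 0" and "set_integrable lborel {0..} (\<lambda>x. x ^ (d - 1 + i) * G x)"
  defines "H \<equiv> \<lambda>x. a * G x + (1 - a) * dilate d c G x"
  shows "set_integrable lborel {0..} (\<lambda>x. x ^ (d - 1 + i) * H x)"
    and "Bmom d i H = (a + (1 - a) / c ^ i) * Bmom d i G"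
proof -
  have integrable_dilate: "set_integrable lborel {0..} (\<lambda>x. x ^ (d - 1 + i) * dilate d c G x)"
    using Bmom_dilate(1)[OF assms(1,2)] assms(3) by blast
  have H_split: "x ^ (d - 1 + i) * H x
      = a * (x ^ (d - 1 + i) * G x) + (1 - a) * (x ^ (d - 1 + i) * dilate d c G x)" for x
    unfolding H_def by (simp add: algebra_simps)
  show "set_integrable lborel {0..} (\<lambda>x. x ^ (d - 1 + i) * H x)"
    unfolding H_split using assms(3) integrable_dilate
    by (intro set_integral_add set_integrable_mult_right)
  have "Bmom d i H = a * Bmom d i G + (1 - a) * Bmom d i (dilate d c G)"
    unfolding Bmom_def H_split using assms(3) integrable_dilate by (simp add: set_integral_add)
  then show "Bmom d i H = (a + (1 - a) / c ^ i) * Bmom d i G"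
    using Bmom_dilate(2)[OF assms(1,2)] by (simp add: algebra_simps)
qed

lemma Vfun_mix_le:
  fixes a c :: real
  assumes "d \<ge> 1" and "c > 0" and G: "\<forall>x>0. G differentiable (at x)"
    and "set_integrable lborel {0..} (\<lambda>x. x ^ (d - 1) * (deriv G x)\<^sup>2)"
  defines "H \<equiv> \<lambda>x. a * G x + (1 - a) * dilate d c G x"
  shows "\<forall>x>0. H differentiable (at x)"
    and "set_integrable lborel {0..} (\<lambda>x. x ^ (d - 1) * (deriv H x)\<^sup>2)"
    and "Vfun d H \<le> (2 * a\<^sup>2 + 2 * (1 - a)\<^sup>2 * c ^ (d + 2)) * Vfun d G"
proof -
  have dilate_differentiable: "\<forall>x>0. dilate d c G differentiable (at x)"
    using G assms(2) has_real_derivative_dilate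
    by (metis DERIV_deriv_iff_real_differentiable mult_pos_pos real_differentiable_def)
  then show "\<forall>x>0. H differentiable (at x)"
    unfolding H_def using G by auto
  note dilate_V = Vfun_dilate[OF assms(1,2) G]
  note lincomb = Vfun_lincomb_le[OF G assms(4) dilate_differentiable, of a "1 - a"]
  show "set_integrable lborel {0..} (\<lambda>x. x ^ (d - 1) * (deriv H x)\<^sup>2)"
    unfolding H_def using lincomb(1) dilate_V(1) assms(4) by blast
  show "Vfun d H \<le> (2 * a\<^sup>2 + 2 * (1 - a)\<^sup>2 * c ^ (d + 2)) * Vfun d G"
    unfolding H_def using lincomb(2) dilate_V assms(4) by (simp add: algebra_simps)
qed

lemma admissible_mix:
  fixes a c :: real
  assumes "admissible d q G" and "d \<ge> 1" and "even q" and "c > 0" and "a + (1 - a) / c ^ q \<noteq> 0"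
  defines "H \<equiv> \<lambda>x. a * G x + (1 - a) * dilate d c G x"
  shows "admissible d q H"
    and "Bmom d q H = (a + (1 - a) / c ^ q) * Bmom d q G"
    and "Vfun d H \<le> (2 * a\<^sup>2 + 2 * (1 - a)\<^sup>2 * c ^ (d + 2)) * Vfun d G"
proof -
  have G_diff: "\<forall>x>0. G differentiable (at x)"
    and G_V: "set_integrable lborel {0..} (\<lambda>x. x ^ (d - 1) * (deriv G x)\<^sup>2)"
    and G_mom: "\<And>i. i \<le> q \<Longrightarrow> even i \<Longrightarrow> set_integrable lborel {0..} (\<lambda>x. x ^ (d - 1 + i) * G x)"
    and G_0: "Bmom d 0 G = 1 / bconst d"
    and G_vanish: "\<And>i. even i \<Longrightarrow> 2 \<le> i \<Longrightarrow> i \<le> q - 2 \<Longrightarrow> Bmom d i G = 0"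
    and G_q: "Bmom d q G \<noteq> 0"
    using assms(1) unfolding admissible_def by auto
  note V = Vfun_mix_le[OF assms(2,4) G_diff G_V, of a, folded H_def]
  note mom = Bmom_mix[OF assms(2,4) G_mom, of _ a, folded H_def]
  show "Bmom d q H = (a + (1 - a) / c ^ q) * Bmom d q G"
    using mom(2) assms(3) by simp
  show "Vfun d H \<le> (2 * a\<^sup>2 + 2 * (1 - a)\<^sup>2 * c ^ (d + 2)) * Vfun d G"
    by (fact V(3))
  show "admissible d q H"
    unfolding admissible_def
  proof (intro conjI allI impI)
    show "H differentiable (at x)" if "x > 0" for x
      using V(1) that by blast
    show "set_integrable lborel {0..} (\<lambda>x. x ^ (d - 1) * (deriv H x)\<^sup>2)"
      by (fact V(2))
    show "set_integrable lborel {0..} (\<lambda>x. x ^ (d - 1 + i) * H x)" if "i \<le> q" "even i" for i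
      using that mom(1) by (simp add: H_def)
    show "Bmom d 0 H = 1 / bconst d"
      using mom(2)[of 0] G_0 by simp
    show "Bmom d i H = 0" if "even i \<and> 2 \<le> i \<and> i \<le> q - 2" for i
    proof -
      have "i \<le> q"
        using that by linarith
      then show ?thesis
        using that mom(2)[of i] G_vanish[of i] by simp
    qed
    show "Bmom d q H \<noteq> 0"
      using mom(2)[of q] G_q assms(3,5) by simp
  qed
qed

lemma constant_on_pos_if_AE_deriv_eq_0:
  fixes G :: "real \<Rightarrow> real"
  assumes G: "\<forall>x>0. G differentiable (at x)"
    and deriv_0: "AE x in lborel. x > 0 \<longrightarrow> deriv G x = 0"
    and "0 < a" "a \<le> b"
  shows "G a = G b"
proof -
  obtain N where N: "\<And>x. x \<in> space lborel - N \<Longrightarrow> x > 0 \<longrightarrow> deriv G x = 0" "N \<in> null_sets lborel"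
    using deriv_0 by (rule AE_E3) blast
  have "negligible N"
    using N(2) by (simp add: negligible_iff_null_sets null_sets_completionI)
  have "(deriv G has_integral (G b - G a)) {a..b}"
  proof (rule fundamental_theorem_of_calculus[OF \<open>a \<le> b\<close>])
    fix x assume "x \<in> {a..b}"
    then have "(G has_real_derivative deriv G x) (at x)"
      using G \<open>0 < a\<close> DERIV_deriv_iff_real_differentiable by simp
    then show "(G has_vector_derivative deriv G x) (at x within {a..b})"
      by (simp add: has_real_derivative_iff_has_vector_derivative has_vector_derivative_at_within)
  qed
  moreover have "(deriv G has_integral 0) {a..b}"
  proof (rule has_integral_spike[OF \<open>negligible N\<close>])
    show "((\<lambda>_. 0) has_integral (0::real)) {a..b}"
      by simp
    show "deriv G x = 0" if "x \<in> {a..b} - N" for x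
      using N(1)[of x] that \<open>0 < a\<close> by simp
  qed
  ultimately have "G b - G a = 0"
    by (rule has_integral_unique)
  then show "G a = G b"
    by simp
qed

lemma Bmom_eq_0_if_constant_on_pos:
  assumes "d \<ge> 1" and "\<And>x. x > 0 \<Longrightarrow> G x = C"
  shows "Bmom d i G = 0"
proof -
  have "x ^ (d - 1 + i) * dilate d 2 G x = 2 ^ d * (x ^ (d - 1 + i) * G x)" if "x > 0" for x
    using that assms(2) by (simp add: dilate_def)
  then have "Bmom d i (dilate d 2 G) = (LINT x:{0..}|lborel. 2 ^ d * (x ^ (d - 1 + i) * G x))"
    unfolding Bmom_def by (rule set_integral_Ici_cong_pos(2))
  also have "\<dots> = 2 ^ d * Bmom d i G"
    unfolding Bmom_def by (rule set_integral_mult_right)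
  finally have "Bmom d i (dilate d 2 G) = 2 ^ d * Bmom d i G" .
  moreover have "Bmom d i (dilate d 2 G) = Bmom d i G / 2 ^ i"
    using Bmom_dilate(2)[OF assms(1)] by simp
  ultimately have "Bmom d i G / 2 ^ i = 2 ^ d * Bmom d i G"
    by simp
  then have "Bmom d i G = 2 ^ (i + d) * Bmom d i G"
    by (simp add: divide_eq_eq power_add ac_simps)
  moreover have "(2::real) ^ (i + d) > 1"
    using assms(1) by (intro one_less_power) auto
  ultimately show ?thesis
    by simp
qed

lemma bconst_pos: "d \<ge> 1 \<Longrightarrow> bconst d > 0"
  unfolding bconst_def by (simp add: Gamma_real_pos)

lemma Vfun_pos:
  assumes "admissible d q G" and "d \<ge> 1"
  shows "Vfun d G > 0"
proof (rule ccontr)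
  assume "\<not> Vfun d G > 0"
  then have "Vfun d G = 0"
    using Vfun_nonneg[of d G] by simp
  have G: "\<forall>x>0. G differentiable (at x)"
    and V_integrable: "set_integrable lborel {0..} (\<lambda>x. x ^ (d - 1) * (deriv G x)\<^sup>2)"
    using assms(1) unfolding admissible_def by auto
  have "AE x in lborel. indicator {0..} x *\<^sub>R (x ^ (d - 1) * (deriv G x)\<^sup>2) = 0"
    using \<open>Vfun d G = 0\<close> V_integrable unfolding Vfun_def set_lebesgue_integral_def set_integrable_def
    by (subst integral_nonneg_eq_0_iff_AE[symmetric]) (auto simp: indicator_def)
  then have deriv_0: "AE x in lborel. x > 0 \<longrightarrow> deriv G x = 0"
    by eventually_elim (auto simp: indicator_def)
  have "G x = G 1" if "x > 0" for x
  proof (cases "x \<le> 1")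
    case True
    then show ?thesis
      using constant_on_pos_if_AE_deriv_eq_0[OF G deriv_0 that] by simp
  next
    case False
    then show ?thesis
      using constant_on_pos_if_AE_deriv_eq_0[OF G deriv_0, of 1 x] by simp
  qed
  then have "Bmom d 0 G = 0"
    by (rule Bmom_eq_0_if_constant_on_pos[OF assms(2)])
  then show False
    using assms bconst_pos[OF assms(2)] unfolding admissible_def by simp
qed

lemma objective_pos:
  assumes "admissible d q G" and "d \<ge> 1"
  shows "objective d q G > 0"
proof -
  have "Bmom d q G \<noteq> 0"
    using assms(1) unfolding admissible_def by simp
  then have "(Bmom d q G ^ 2) ^ (d + 2) > 0"
    by simp
  then have "Bmom d q G ^ (2 * (d + 2)) > 0"
    by (simp only: power_mult)
  then show ?thesis
    unfolding objective_def using Vfun_pos[OF assms] by simp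
qed

lemma objective_le_scaled:
  assumes "Bmom d q H = t * Bmom d q G" and "Vfun d H \<le> M * Vfun d G"
  shows "objective d q H \<le> t ^ (2 * (d + 2)) * M ^ (2 * q) * objective d q G"
proof -
  have "Vfun d H ^ (2 * q) \<le> (M * Vfun d G) ^ (2 * q)"
    using assms(2) Vfun_nonneg[of d H] by (rule power_mono)
  then have "objective d q H \<le> (t * Bmom d q G) ^ (2 * (d + 2)) * (M * Vfun d G) ^ (2 * q)"
    unfolding objective_def assms(1) by (rule mult_left_mono[OF _ zero_le_even_power'])
  also have "\<dots> = t ^ (2 * (d + 2)) * M ^ (2 * q) * objective d q G"
    unfolding objective_def by (simp add: power_mult_distrib)
  finally show ?thesis .
qed

lemma ex_weight_mix_factor_less_1:
  fixes r L :: real and m n :: nat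
  assumes "r \<noteq> 0" and "r \<noteq> 1" and "m > 0"
  shows "\<exists>a. a + (1 - a) / r \<noteq> 0 \<and> (a + (1 - a) / r) ^ m * (2 * a\<^sup>2 + 2 * (1 - a)\<^sup>2 * L) ^ n < 1"
proof -
  define t where "t a = a + (1 - a) / r" for a
  define f where "f a = t a ^ m * (2 * a\<^sup>2 + 2 * (1 - a)\<^sup>2 * L) ^ n" for a
  define a\<^sub>0 where "a\<^sub>0 = 1 / (1 - r)"
  have t_eq_0_iff: "t a = 0 \<longleftrightarrow> a = a\<^sub>0" for a
    using assms(1,2) unfolding t_def a\<^sub>0_def by (auto simp: field_simps)
  have "isCont f a\<^sub>0"
    using assms(1) unfolding f_def t_def by (intro continuous_intros)
  moreover have "f a\<^sub>0 = 0"
    using t_eq_0_iff assms(3) unfolding f_def by simp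
  ultimately have "(f \<longlongrightarrow> 0) (at a\<^sub>0)"
    by (simp add: isCont_def)
  then have "eventually (\<lambda>a. f a < 1 \<and> a \<noteq> a\<^sub>0) (at a\<^sub>0)"
    by (intro eventually_conj order_tendstoD(2)) (auto simp: eventually_at_filter)
  then obtain a where "f a < 1" "a \<noteq> a\<^sub>0"
    using eventually_happens' trivial_limit_at by blast
  then show ?thesis
    using t_eq_0_iff unfolding f_def t_def by blast
qed

theorem proposition1:
  fixes d q :: nat
  assumes "d \<ge> 1" and "q \<ge> 2" and "even q"
  shows "\<not> (\<exists>G. admissible d q G \<and>
               (\<forall>H. admissible d q H \<longrightarrow> objective d q G \<le> objective d q H))"
proof
  assume "\<exists>G. admissible d q G \<and> (\<forall>H. admissible d q H \<longrightarrow> objective d q G \<le> objective d q H)"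
  then obtain G where G: "admissible d q G"
    and minimal: "\<And>H. admissible d q H \<Longrightarrow> objective d q G \<le> objective d q H"
    by blast
  define t where "t a = a + (1 - a) / 2 ^ q" for a :: real
  define M where "M a = 2 * a\<^sup>2 + 2 * (1 - a)\<^sup>2 * 2 ^ (d + 2)" for a :: real
  have "(2::real) ^ q > 1"
    using assms(2) by (intro one_less_power) auto
  then obtain a where a_nonzero: "t a \<noteq> 0" and a_small: "t a ^ (2 * (d + 2)) * M a ^ (2 * q) < 1"
    using ex_weight_mix_factor_less_1[of "2 ^ q" "2 * (d + 2)" "2 ^ (d + 2)" "2 * q"]
    unfolding t_def M_def by auto
  define H where "H = (\<lambda>x. a * G x + (1 - a) * dilate d 2 G x)"
  note H = admissible_mix[OF G assms(1,3) zero_less_numeral a_nonzero[unfolded t_def], folded H_def t_def M_def]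
  have "objective d q H \<le> t a ^ (2 * (d + 2)) * M a ^ (2 * q) * objective d q G"
    using H(2,3) by (rule objective_le_scaled)
  also have "\<dots> < objective d q G"
    using a_small objective_pos[OF G assms(1)] by simp
  finally show False
    using minimal[OF H(1)] by simp
qed

end
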